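(* Let $S$ be a commutative ring and $p,q\in S$. (1) If $c\in V[p,q]$, then there exist $x,y,z\in S$ with $px+qy=-c$ and $xy-z^2=-c^2$; there also exist $x_1,y_1,z_1\in S$ with $px_1+qy_1=c$ and $x_1y_1-z_1^2=-c^2$. (2) If $V[p,q]$ contains a unit of $S$, then there exist $x_2,y_2,z_2\in S$ with $px_2+qy_2=x_2y_2-z_2^2=-1$.
   Context: $V[p,q]=\{pr_1^2+qr_2^2: r_1,r_2\in S\}$. *)

theory Defs
  imports Main
begin

definition V :: "'a::comm_ring_1 \<Rightarrow> 'a \<Rightarrow> 'a set" where
  "V p q = {p * r1^2 + q * r2^2 | r1 r2. True}"

end

theory Submission
  imports Defs
begin

(* The solution sets are stable under scaling (x, y, z) by a ring
   element v, which multiplies the right-hand sides -c and -c^2 by v and v^2.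
   Part (2) follows: if c in V[p,q] is a unit with c v = 1, scaling the first
   solution for c by v yields p x + q y = x y - z^2 = -1. *)

lemma represented_neg:
  fixes p q a b c :: "'a::comm_ring_1"
  assumes "c = p * a^2 + q * b^2"
  shows "p * (2*q*a*b - a^2) + q * (- (b^2) - 2*p*a*b) = - c"
    and "(2*q*a*b - a^2) * (- (b^2) - 2*p*a*b) - (a*b + p*a^2 - q*b^2)^2 = - (c^2)"
  using assms by (simp_all add: algebra_simps power2_eq_square)

text \<open>Negating \<open>x\<close> and \<open>y\<close> flips the linear equation and preserves \<open>x y - z\<^sup>2\<close>:
  the witness for the right-hand sides \<open>c\<close> and \<open>-c\<^sup>2\<close>.\<close>
lemma represented_pos:
  fixes p q a b c :: "'a::comm_ring_1"
  assumes "c = p * a^2 + q * b^2"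
  shows "p * (a^2 - 2*q*a*b) + q * (b^2 + 2*p*a*b) = c"
    and "(a^2 - 2*q*a*b) * (b^2 + 2*p*a*b) - (a*b + p*a^2 - q*b^2)^2 = - (c^2)"
  using assms by (simp_all add: algebra_simps power2_eq_square)

lemma solution_scale:
  fixes p q x y z c v :: "'a::comm_ring_1"
  assumes "p * x + q * y = - c" and "x * y - z^2 = - (c^2)"
  shows "p * (v*x) + q * (v*y) = - (c*v)"
    and "(v*x) * (v*y) - (v*z)^2 = - ((c*v)^2)"
proof -
  have "p * (v*x) + q * (v*y) = v * (p*x + q*y)" by (simp add: algebra_simps)
  then show "p * (v*x) + q * (v*y) = - (c*v)" using assms(1) by (simp add: algebra_simps)
  have "(v*x) * (v*y) - (v*z)^2 = v^2 * (x*y - z^2)"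
    by (simp add: algebra_simps power2_eq_square)
  also have "\<dots> = - ((c*v)^2)"
    using assms(2) by (simp add: power_mult_distrib)
  finally show "(v*x) * (v*y) - (v*z)^2 = - ((c*v)^2)" .
qed

theorem corollary6p17:
  fixes p q :: "'a::comm_ring_1"
  shows "(\<forall>c \<in> V p q.
            (\<exists>x y z. p * x + q * y = - c \<and> x * y - z^2 = - (c^2)) \<and>
            (\<exists>x1 y1 z1. p * x1 + q * y1 = c \<and> x1 * y1 - z1^2 = - (c^2)))
       \<and> ((\<exists>u \<in> V p q. u dvd 1) \<longrightarrow>
            (\<exists>x2 y2 z2. p * x2 + q * y2 = -1 \<and> x2 * y2 - z2^2 = -1))"
proof (intro conjI impI)
  show "\<forall>c \<in> V p q.
          (\<exists>x y z. p * x + q * y = - c \<and> x * y - z^2 = - (c^2)) \<and>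
          (\<exists>x1 y1 z1. p * x1 + q * y1 = c \<and> x1 * y1 - z1^2 = - (c^2))"
  proof
    fix c assume "c \<in> V p q"
    then obtain a b where c: "c = p * a^2 + q * b^2" unfolding V_def by blast
    have "\<exists>x y z. p * x + q * y = - c \<and> x * y - z^2 = - (c^2)"
      using represented_neg[OF c] by (intro exI conjI)
    moreover have "\<exists>x1 y1 z1. p * x1 + q * y1 = c \<and> x1 * y1 - z1^2 = - (c^2)"
      using represented_pos[OF c] by (intro exI conjI)
    ultimately show "(\<exists>x y z. p * x + q * y = - c \<and> x * y - z^2 = - (c^2)) \<and>
        (\<exists>x1 y1 z1. p * x1 + q * y1 = c \<and> x1 * y1 - z1^2 = - (c^2))" ..
  qed
next
  assume "\<exists>u \<in> V p q. u dvd 1"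
  then obtain a b v where unit: "(p * a^2 + q * b^2) * v = 1"
    unfolding V_def by (auto elim!: dvdE simp: mult.commute)
  define c where "c = p * a^2 + q * b^2"
  from solution_scale[OF represented_neg[OF c_def], of v] unit
  show "\<exists>x2 y2 z2. p * x2 + q * y2 = -1 \<and> x2 * y2 - z2^2 = -1"
    unfolding c_def by (intro exI conjI) simp_all
qed

end
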